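(* Let $g(x,y)=\sum_{i,j=-\infty}^{\infty}c(i,j)x^iy^j$ be a nonzero bilateral formal series. Then $g\perp g$ if and only if there exist integers $m_0,k_0$ with $c(m_0,k_0)\neq0$ such that for all integers $i,j$, $$c(m_0,k_0)c(i,j)-c(m_0,i)c(k_0,j)+c(m_0,j)c(k_0,i)=0.$$
   Context: A bilateral formal series in $x,y$ is a formal expression $\sum_{i,j\in\mathbb{Z}}c(i,j)x^iy^j$ with complex coefficients. For two such series $f,g$, the expression $g(u,v)f(z,w)-g(u,w)f(z,v)+g(v,w)f(z,u)$ is a well-defined formal series in four independent variables $u,v,w,z$. One writes $f\perp g$ if this expression is identically zero. *)

theory Defs
  imports Complex_Main
begin

text \<open>A bilateral formal series in two variables x,y is represented by its coefficient
  function c, i.e. the series sum over i,j in Z of c(i,j) x^i y^j.\<close>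
type_synonym bseries2 = "int \<Rightarrow> int \<Rightarrow> complex"

text \<open>A formal series in the four variables u,v,w,z, represented by its coefficient function:
  F a b c d is the coefficient of u^a v^b w^c z^d.\<close>
type_synonym bseries4 = "int \<Rightarrow> int \<Rightarrow> int \<Rightarrow> int \<Rightarrow> complex"

text \<open>Products of two series in disjoint pairs of variables (each coefficient is a single
  product of coefficients, so these are well defined).\<close>

definition prod_uv_zw :: "bseries2 \<Rightarrow> bseries2 \<Rightarrow> bseries4" where
  "prod_uv_zw g f = (\<lambda>a b c d. g a b * f d c)"

definition prod_uw_zv :: "bseries2 \<Rightarrow> bseries2 \<Rightarrow> bseries4" where
  "prod_uw_zv g f = (\<lambda>a b c d. g a c * f d b)"

definition prod_vw_zu :: "bseries2 \<Rightarrow> bseries2 \<Rightarrow> bseries4" where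
  "prod_vw_zu g f = (\<lambda>a b c d. g b c * f d a)"

definition perp :: "bseries2 \<Rightarrow> bseries2 \<Rightarrow> bool" where
  "perp f g \<longleftrightarrow>
     (\<forall>a b c d. prod_uv_zw g f a b c d - prod_uw_zv g f a b c d + prod_vw_zu g f a b c d = 0)"

end

theory Submission
  imports Defs
begin

text \<open>Read c as a skew form: perp c c says that every coefficient of z gives a three-term
  Pluecker relation c(a,b)c(d,x) - c(a,x)c(d,b) + c(b,x)c(d,a) = 0. These relations force c to be
  antisymmetric, which turns them into the stated condition at every index pair (m0,k0).
  Conversely, if c(m0,k0) is nonzero, the condition exhibits c as the decomposable form
  (row m0 / c(m0,k0)) \<and> (row k0), and decomposable forms satisfy the relations identically.\<close>

definition wedge :: "(int \<Rightarrow> complex) \<Rightarrow> (int \<Rightarrow> complex) \<Rightarrow> bseries2" where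
  "wedge p q = (\<lambda>i j. p i * q j - p j * q i)"

lemma perp_iff:
  "perp f g \<longleftrightarrow> (\<forall>a b x d. g a b * f d x - g a x * f d b + g b x * f d a = 0)"
  unfolding perp_def prod_uv_zw_def prod_uw_zv_def prod_vw_zu_def by blast

lemma perp_wedge: "perp (wedge p q) (wedge p q)"
  unfolding perp_iff wedge_def by (simp add: algebra_simps)

lemma perp_self_antisym_at:
  assumes "perp c c" and "c m k \<noteq> 0"
  shows "c k b = - c b k"
proof -
  have E: "\<And>a b x d. c a b * c d x - c a x * c d b + c b x * c d a = 0"
    using assms(1) by (simp add: perp_iff)
  have "c k k * c m k = 0"
    using E[where a=k and b=k and x=k and d=m] by simp
  then have "c k k = 0"
    using assms(2) by simp
  then have "(c k b + c b k) * c m k = 0"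
    using E[where a=k and b=b and x=k and d=m] by (simp add: algebra_simps)
  then show ?thesis
    using assms(2) by (simp add: add_eq_0_iff)
qed

lemma perp_self_antisym:
  assumes "perp c c"
  shows "c j i = - c i j"
proof (cases "\<exists>m. c m j \<noteq> 0")
  case True
  then show ?thesis
    using perp_self_antisym_at[OF assms] by blast
next
  case False
  then have "c i j = 0"
    by blast
  moreover have "c j i = 0"
  proof (rule ccontr)
    assume "c j i \<noteq> 0"
    then have "c i j = - c j i"
      using perp_self_antisym_at[OF assms] by blast
    with \<open>c i j = 0\<close> \<open>c j i \<noteq> 0\<close> show False
      by simp
  qed
  ultimately show ?thesis
    by simp
qed

lemma perp_self_Pluecker:
  assumes "perp c c"
  shows "c m k * c i j - c m i * c k j + c m j * c k i = 0"
proof -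
  have "c i j * c m k - c i k * c m j + c j k * c m i = 0"
    using assms by (simp add: perp_iff)
  then show ?thesis
    using perp_self_antisym[OF assms, of i k] perp_self_antisym[OF assms, of j k]
    by (simp add: algebra_simps)
qed

lemma Pluecker_imp_wedge:
  assumes "c m k \<noteq> 0"
    and "\<And>i j. c m k * c i j - c m i * c k j + c m j * c k i = 0"
  shows "c = wedge (\<lambda>i. c m i / c m k) (c k)"
proof (intro ext)
  fix i j
  have "c m k * c i j = c m i * c k j - c m j * c k i"
    using assms(2)[of i j] by (simp add: algebra_simps)
  then show "c i j = wedge (\<lambda>i. c m i / c m k) (c k) i j"
    using assms(1) unfolding wedge_def by (simp add: field_simps)
qed

theorem lemma2p3:
  fixes c :: bseries2
  assumes "c \<noteq> (\<lambda>i j. 0)"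
  shows "perp c c \<longleftrightarrow>
    (\<exists>m0 k0. c m0 k0 \<noteq> 0 \<and>
       (\<forall>i j. c m0 k0 * c i j - c m0 i * c k0 j + c m0 j * c k0 i = 0))"
proof
  assume "perp c c"
  obtain m0 k0 where "c m0 k0 \<noteq> 0"
    using assms by blast
  with perp_self_Pluecker[OF \<open>perp c c\<close>] show "\<exists>m0 k0. c m0 k0 \<noteq> 0 \<and>
       (\<forall>i j. c m0 k0 * c i j - c m0 i * c k0 j + c m0 j * c k0 i = 0)"
    by blast
next
  assume "\<exists>m0 k0. c m0 k0 \<noteq> 0 \<and>
       (\<forall>i j. c m0 k0 * c i j - c m0 i * c k0 j + c m0 j * c k0 i = 0)"
  then obtain m0 k0 where "c m0 k0 \<noteq> 0"
    and "\<And>i j. c m0 k0 * c i j - c m0 i * c k0 j + c m0 j * c k0 i = 0"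
    by blast
  then have "c = wedge (\<lambda>i. c m0 i / c m0 k0) (c k0)"
    by (rule Pluecker_imp_wedge)
  then show "perp c c"
    using perp_wedge by metis
qed

end
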